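(* Let $k\ge 2$ be even and $i\in\{1,\ldots,k-1\}$ such that $\binom{k}{i}$ and $\binom{k-1}{i}$ are both odd. Then $$S=\sum_{\substack{0\le \ell\le k-i-2\\ \ell\text{ even}}}\binom{k-i}{\ell}\binom{i-2}{k-i-\ell-2}^2$$ is odd.
   Context: Convention: for integers $a,b$, $\binom{a}{b}=0$ unless $0\le b\le a$. *)

theory Defs
  imports Main
begin

definition binom :: "int \<Rightarrow> int \<Rightarrow> nat" where
  "binom a b = (if 0 \<le> b \<and> b \<le> a then nat a choose nat b else 0)"

end

theory Submission
  imports Defs
begin

text \<open>Modulo 2 the squares in the sum may be dropped, and the terms with odd \<open>l\<close> vanish
  because \<open>k - i\<close> is even; what remains is a Vandermonde convolution equal to
  \<open>(k-2 choose i)\<close>. Pascal's rule together with \<open>(k-2 choose i-1)\<close> being even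
  (even over odd) makes this congruent to \<open>(k-1 choose i)\<close>, which is odd.\<close>

lemma binom_of_nat [simp]: "binom (int a) (int b) = a choose b"
  by (simp add: binom_def)

lemma even_choose_if_even_odd:
  fixes a b :: nat
  assumes "even a" and "odd b"
  shows "even (a choose b)"
proof -
  from \<open>odd b\<close> have "b > 0" by (cases b) auto
  then have "b * (a choose b) = a * ((a - 1) choose (b - 1))"
    by (rule times_binomial_minus1_eq)
  with \<open>even a\<close> have "even (b * (a choose b))" by simp
  with \<open>odd b\<close> show ?thesis by (simp add: even_mult_iff)
qed

lemma even_Suc_choose_even:
  fixes a i :: nat
  assumes "even a" and "even i"
  shows "even (Suc a choose i) = even (a choose i)"
proof (cases i)
  case (Suc j)
  with assms have "even (a choose j)" by (simp add: even_choose_if_even_odd)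
  with Suc show ?thesis by simp
qed simp

lemma even_sum_cong:
  assumes "finite A" and "\<And>x. x \<in> A \<Longrightarrow> even (f x :: nat) = even (g x)"
  shows "even (sum f A) = even (sum g A)"
  using assms by (induction A rule: finite_induct) auto

lemma even_choose_add_iff_sum_even_indices:
  fixes n m r :: nat
  assumes "even n"
  shows "even ((n + m) choose r)
    = even (\<Sum>l \<in> {l. l \<le> r \<and> even l}. (n choose l) * (m choose (r - l))^2)"
proof -
  define g where "g l = (n choose l) * (m choose (r - l))" for l
  define E where "E = {l. l \<le> r \<and> even l}"
  have "E \<subseteq> {..r}" unfolding E_def by auto
  then have "sum g {..r} = sum g E + sum g ({..r} - E)"
    by (simp add: sum.subset_diff add.commute)
  moreover have "even (sum g ({..r} - E))"
    by (rule dvd_sum) (auto simp: E_def g_def even_choose_if_even_odd[OF assms])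
  moreover have "even (sum g E)
      = even (\<Sum>l \<in> E. (n choose l) * (m choose (r - l))^2)"
    by (rule even_sum_cong) (auto simp: E_def g_def power2_eq_square even_mult_iff)
  ultimately show ?thesis
    unfolding E_def g_def vandermonde[symmetric] by simp
qed

lemma sum_binom_even_indices_of_nat:
  fixes n m :: nat
  assumes "n \<ge> 2"
  shows "(\<Sum>l \<in> {l::int. 0 \<le> l \<and> l \<le> int n - 2 \<and> even l}.
            binom (int n) l * (binom (int m) (int n - l - 2))^2)
       = (\<Sum>l \<in> {l. l \<le> n - 2 \<and> even l}. (n choose l) * (m choose (n - 2 - l))^2)"
proof -
  have "{l::int. 0 \<le> l \<and> l \<le> int n - 2 \<and> even l} = int ` {l. l \<le> n - 2 \<and> even l}"
  proof (intro set_eqI iffI)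
    fix x :: int
    assume x: "x \<in> {l. 0 \<le> l \<and> l \<le> int n - 2 \<and> even l}"
    then have "nat x \<in> {l. l \<le> n - 2 \<and> even l}" by (auto simp: even_nat_iff)
    with x show "x \<in> int ` {l. l \<le> n - 2 \<and> even l}"
      by (auto intro: image_eqI[where x = "nat x"])
  qed (use assms in auto)
  moreover have "int n - int l - 2 = int (n - 2 - l)" if "l \<le> n - 2" for l
    using that assms by linarith
  ultimately show ?thesis
    by (auto simp: sum.reindex intro!: sum.cong)
qed

theorem mainTheorem11:
  fixes k i :: nat
  assumes "k \<ge> 2" and "even k" and "1 \<le> i" and "i \<le> k - 1"
    and "odd (k choose i)" and "odd ((k - 1) choose i)"
  shows "odd (\<Sum>l \<in> {l::int. 0 \<le> l \<and> l \<le> int k - int i - 2 \<and> even l}.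
           binom (int k - int i) l * (binom (int i - 2) (int k - int i - l - 2))^2)"
proof -
  have "even i"
    using assms(2,5) even_choose_if_even_odd by blast
  with assms(1-4) have i: "2 \<le> i" "i \<le> k - 2"
    by presburger+
  then have ints: "int k - int i = int (k - i)" "int i - 2 = int (i - 2)"
    by auto
  have "odd ((k - 2) choose i)"
    using assms(1,2,6) \<open>even i\<close> even_Suc_choose_even[of "k - 2" i]
    by (simp add: Suc_diff_Suc numeral_2_eq_2)
  also have "(k - 2) choose i = ((k - i) + (i - 2)) choose (k - i - 2)"
    using i binomial_symmetric[of i "k - 2"] by (simp add: algebra_simps)
  finally have "odd (((k - i) + (i - 2)) choose (k - i - 2))" .
  then have odd_sum: "odd (\<Sum>l \<in> {l. l \<le> k - i - 2 \<and> even l}.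
      ((k - i) choose l) * ((i - 2) choose (k - i - 2 - l))^2)"
    using \<open>even k\<close> \<open>even i\<close> by (subst (asm) even_choose_add_iff_sum_even_indices) auto
  have "2 \<le> k - i"
    using i by simp
  with odd_sum show ?thesis
    unfolding ints by (simp only: sum_binom_even_indices_of_nat not_False_eq_True)
qed

end
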